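(* For every $r\geq 2$ there is a constant $C=C(r)>0$ such that the following holds. Let $H$ be an $r$-uniform hypergraph on $n$ vertices of average degree $d$, and let $p>0$. Then $$n^{r/p}\cdot\lambda_2^{(p)}(H)\geq r\,\mathrm{disc}^{+}(H)-Cd\qquad\text{and}\qquad n^{r/p}\cdot\mu^{(p)}(H)\geq r\,\mathrm{disc}(H)-Cd.$$
   Context: For an $r$-uniform hypergraph $H$ on vertex set $V$ with $|V|=n$, its adjacency map is $\tau_H(x_1,\dots,x_r)=\frac{1}{(r-1)!}\sum x_1(v_1)\cdots x_r(v_r)$, the sum over ordered tuples $(v_1,\dots,v_r)\in V^r$ with $\{v_1,\dots,v_r\}\in E(H)$. The normalized adjacency map is $\sigma_H=\tau_H-\frac{r|E(H)|}{n^r}J$ with $J(x_1,\dots,x_r)=\sum_{v_1,\dots,v_r\in V}x_1(v_1)\cdots x_r(v_r)$. With $\|x\|_p=(\sum_v|x(v)|^p)^{1/p}$, $\lambda_2^{(p)}(H)=\sup_{x\in\mathbb{R}^V,\|x\|_p=1}\sigma_H(x,\dots,x)$ and $\mu^{(p)}(H)=\sup_{\|x_1\|_p=\dots=\|x_r\|_p=1}|\sigma_H(x_1,\dots,x_r)|$. With edge density $q=|E(H)|/\binom{n}{r}$ and $e(U)$ the number of edges inside $U\subset V$, $\mathrm{disc}(U)=e(U)-q\binom{|U|}{r}$, $\mathrm{disc}^{+}(H)=\max_U\mathrm{disc}(U)$, $\mathrm{disc}(H)=\max_U|\mathrm{disc}(U)|$. The average degree is $d=r|E(H)|/n$. *)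

theory Defs
  imports "HOL-Analysis.Analysis"
begin

text \<open>An r-uniform hypergraph: a finite vertex set V and a set E of edges,
  each edge an r-element subset of V. Vertices are natural numbers
  (any finite vertex set can be relabelled).\<close>
definition uniform_hypergraph :: "nat \<Rightarrow> nat set \<Rightarrow> nat set set \<Rightarrow> bool" where
  "uniform_hypergraph r V E \<longleftrightarrow> finite V \<and> (\<forall>e\<in>E. e \<subseteq> V \<and> card e = r)"

definition tuples :: "nat \<Rightarrow> nat set \<Rightarrow> (nat \<Rightarrow> nat) set" where
  "tuples r V = PiE {..<r} (\<lambda>_. V)"

text \<open>Adjacency map tau_H(x_1,...,x_r); the arguments are xs 0, ..., xs (r-1).\<close>
definition adj_map :: "nat \<Rightarrow> nat set \<Rightarrow> nat set set \<Rightarrow> (nat \<Rightarrow> nat \<Rightarrow> real) \<Rightarrow> real" where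
  "adj_map r V E xs = (1 / fact (r - 1)) *
     (\<Sum>v\<in>{v\<in>tuples r V. v ` {..<r} \<in> E}. \<Prod>i<r. xs i (v i))"

definition J_map :: "nat \<Rightarrow> nat set \<Rightarrow> (nat \<Rightarrow> nat \<Rightarrow> real) \<Rightarrow> real" where
  "J_map r V xs = (\<Sum>v\<in>tuples r V. \<Prod>i<r. xs i (v i))"

definition norm_adj_map :: "nat \<Rightarrow> nat set \<Rightarrow> nat set set \<Rightarrow> (nat \<Rightarrow> nat \<Rightarrow> real) \<Rightarrow> real" where
  "norm_adj_map r V E xs = adj_map r V E xs
     - (real r * real (card E) / real (card V) ^ r) * J_map r V xs"

definition pnorm :: "real \<Rightarrow> nat set \<Rightarrow> (nat \<Rightarrow> real) \<Rightarrow> real" where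
  "pnorm p V x = (\<Sum>v\<in>V. \<bar>x v\<bar> powr p) powr (1 / p)"

definition lambda2 :: "real \<Rightarrow> nat \<Rightarrow> nat set \<Rightarrow> nat set set \<Rightarrow> real" where
  "lambda2 p r V E = (SUP x\<in>{x. pnorm p V x = 1}. norm_adj_map r V E (\<lambda>_. x))"

definition mu :: "real \<Rightarrow> nat \<Rightarrow> nat set \<Rightarrow> nat set set \<Rightarrow> real" where
  "mu p r V E = (SUP xs\<in>{xs. \<forall>i<r. pnorm p V (xs i) = 1}. \<bar>norm_adj_map r V E xs\<bar>)"

definition edge_density :: "nat \<Rightarrow> nat set \<Rightarrow> nat set set \<Rightarrow> real" where
  "edge_density r V E = real (card E) / real (card V choose r)"

definition edges_in :: "nat set set \<Rightarrow> nat set \<Rightarrow> nat" where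
  "edges_in E U = card {e\<in>E. e \<subseteq> U}"

definition disc_set :: "nat \<Rightarrow> nat set \<Rightarrow> nat set set \<Rightarrow> nat set \<Rightarrow> real" where
  "disc_set r V E U = real (edges_in E U) - edge_density r V E * real (card U choose r)"

definition disc_plus :: "nat \<Rightarrow> nat set \<Rightarrow> nat set set \<Rightarrow> real" where
  "disc_plus r V E = Max (disc_set r V E ` Pow V)"

definition disc :: "nat \<Rightarrow> nat set \<Rightarrow> nat set set \<Rightarrow> real" where
  "disc r V E = Max ((\<lambda>U. \<bar>disc_set r V E U\<bar>) ` Pow V)"

definition avg_degree :: "nat \<Rightarrow> nat set \<Rightarrow> nat set set \<Rightarrow> real" where
  "avg_degree r V E = real r * real (card E) / real (card V)"

end

theory Submission
  imports Defs
begin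

text \<open>Test sigma_H on the indicator of a vertex set U, scaled to unit p-norm. Up to the
  factor (n/|U|)^(r/p) \<ge> 1, n^(r/p) sigma_H of it equals r (e(U) - |E| (|U|/n)^r), and this
  differs from r disc(U) only by r |E| |C(|U|,r)/C(n,r) - (|U|/n)^r| \<le> r^3 |E|/n = r^2 d
  (so C = r^2), because the ratio of binomial coefficients is a product of r factors each
  within r/n of |U|/n. Sets of negative discrepancy are harmless for lambda_2: U = V gives
  sigma_H = 0, so lambda_2 \<ge> 0.\<close>

lemma binomial_ratio_eq_prod:
  "real (u choose r) / real (n choose r) = (\<Prod>i<r. (real u - real i) / (real n - real i))"
proof -
  have "(\<Prod>i<r. real m - real i) = fact r * real (m choose r)" for m
    by (simp add: binomial_gbinomial gbinomial_mult_fact atLeast0LessThan)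
  then show ?thesis
    by (simp add: prod_dividef)
qed

lemma falling_ratio_bounds:
  assumes "i \<le> u" and "u \<le> n" and "i < n"
  shows "0 \<le> (real u - real i) / (real n - real i)"
    and "(real u - real i) / (real n - real i) \<le> real u / real n"
    and "real u / real n - (real u - real i) / (real n - real i) \<le> real i / real n"
proof -
  define t where "t = (real n - real u) / (real n - real i)"
  have diff: "real u / real n - (real u - real i) / (real n - real i) = real i / real n * t"
    using assms by (simp add: t_def field_simps)
  have "0 \<le> t" "t \<le> 1"
    using assms by (auto simp: t_def)
  then have "0 \<le> real i / real n * t" "real i / real n * t \<le> real i / real n"
    using mult_left_le[of t "real i / real n"] by simp_all
  then show "(real u - real i) / (real n - real i) \<le> real u / real n"
    and "real u / real n - (real u - real i) / (real n - real i) \<le> real i / real n"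
    unfolding diff [symmetric] by linarith+
  show "0 \<le> (real u - real i) / (real n - real i)"
    using assms by simp
qed

lemma binomial_ratio_approx_power:
  assumes "r \<le> n" and "u \<le> n"
  shows "\<bar>real (u choose r) / real (n choose r) - (real u / real n) ^ r\<bar> \<le> real r ^ 2 / real n"
proof (cases "r \<le> u")
  case False
  have "(real u / real n) ^ r \<le> (real u / real n) ^ 1"
    using False assms by (intro power_decreasing) (auto simp: divide_le_eq_1)
  also have "\<dots> \<le> real r ^ 2 / real n"
  proof -
    have "u \<le> r ^ 2"
      using False le_square[of r] unfolding power2_eq_square by linarith
    then show ?thesis
      by (simp add: divide_right_mono flip: of_nat_power)
  qed
  finally show ?thesis
    using False by (simp add: binomial_eq_0)
next
  case True
  let ?q = "\<lambda>i. (real u - real i) / (real n - real i)" and ?a = "real u / real n"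
  have q: "0 \<le> ?q i" "?q i \<le> ?a" "\<bar>?q i - ?a\<bar> \<le> real r / real n" if "i < r" for i
    using falling_ratio_bounds[of i u n] that True assms divide_right_mono[of "real i" "real r" "real n"]
    by auto
  have "?a \<le> 1"
    using assms by (auto simp: divide_le_eq_1)
  then have "norm (?q i) \<le> 1" if "i < r" for i
    using q(1,2)[OF that] by (metis abs_of_nonneg order.trans real_norm_def)
  then have "norm ((\<Prod>i<r. ?q i) - (\<Prod>i<r. ?a)) \<le> (\<Sum>i<r. norm (?q i - ?a))"
    using \<open>?a \<le> 1\<close> by (intro norm_prod_diff) auto
  also have "\<dots> \<le> real r * (real r / real n)"
    using sum_bounded_above[of "{..<r}" _ "real r / real n"] q(3) by simp
  finally show ?thesis
    by (simp add: binomial_ratio_eq_prod power2_eq_square)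
qed

lemma finite_tuples: "finite V \<Longrightarrow> finite (tuples r V)"
  by (simp add: tuples_def finite_PiE)

lemma card_tuples_image_eq:
  assumes "finite e" and "e \<subseteq> V" and "card e = r"
  shows "card {v \<in> tuples r V. v ` {..<r} = e} = fact r"
proof -
  have "{v \<in> tuples r V. v ` {..<r} = e} = {v \<in> {..<r} \<rightarrow>\<^sub>E e. inj_on v {..<r}}"
  proof (intro set_eqI iffI)
    fix v assume v: "v \<in> {v \<in> tuples r V. v ` {..<r} = e}"
    then have "inj_on v {..<r}"
      using assms by (intro eq_card_imp_inj_on) auto
    with v show "v \<in> {v \<in> {..<r} \<rightarrow>\<^sub>E e. inj_on v {..<r}}"
      by (auto simp: tuples_def PiE_def)
  next
    fix v assume v: "v \<in> {v \<in> {..<r} \<rightarrow>\<^sub>E e. inj_on v {..<r}}"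
    then have "v ` {..<r} = e"
      using assms by (intro card_subset_eq) (auto simp: card_image)
    with v assms(2) show "v \<in> {v \<in> tuples r V. v ` {..<r} = e}"
      by (auto simp: tuples_def PiE_def)
  qed
  also have "card \<dots> = fact r"
    using assms card_inj_on_subset_funcset[of "{..<r}" e "{..<r}"]
    by (simp add: fact_prod_rev)
  finally show ?thesis .
qed

lemma card_edge_tuples_within:
  assumes "uniform_hypergraph r V E"
  shows "card {v \<in> tuples r V. v ` {..<r} \<in> E \<and> v ` {..<r} \<subseteq> U} = fact r * edges_in E U"
proof -
  have "finite V" and edge: "\<And>e. e \<in> E \<Longrightarrow> e \<subseteq> V \<and> card e = r"
    using assms by (auto simp: uniform_hypergraph_def)
  have "{e \<in> E. e \<subseteq> U} \<subseteq> Pow V"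
    using edge by auto
  with \<open>finite V\<close> edge have fin: "finite {e \<in> E. e \<subseteq> U}" "\<And>e. e \<in> E \<Longrightarrow> finite e"
    by (auto intro: finite_subset)
  have "{v \<in> tuples r V. v ` {..<r} \<in> E \<and> v ` {..<r} \<subseteq> U}
      = (\<Union>e \<in> {e \<in> E. e \<subseteq> U}. {v \<in> tuples r V. v ` {..<r} = e})"
    by blast
  then have "card {v \<in> tuples r V. v ` {..<r} \<in> E \<and> v ` {..<r} \<subseteq> U}
      = (\<Sum>e \<in> {e \<in> E. e \<subseteq> U}. card {v \<in> tuples r V. v ` {..<r} = e})"
    using \<open>finite V\<close> fin by (simp add: card_UN_disjoint finite_tuples disjoint_iff)
  also have "\<dots> = (\<Sum>e \<in> {e \<in> E. e \<subseteq> U}. fact r)"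
    using edge fin(2) by (intro sum.cong) (auto simp: card_tuples_image_eq)
  finally show ?thesis
    by (simp add: edges_in_def)
qed

lemma prod_if_mem:
  fixes c :: "'a::comm_semiring_1"
  shows "(\<Prod>i<r. if v i \<in> U then c else 0) = (if v ` {..<r} \<subseteq> U then c ^ r else 0)"
proof (cases "v ` {..<r} \<subseteq> U")
  case True
  then show ?thesis
    by (simp add: image_subset_iff)
next
  case False
  then show ?thesis
    by (subst prod_zero) auto
qed

lemma adj_map_indicator:
  assumes "uniform_hypergraph r V E" and "r \<ge> 1"
  shows "adj_map r V E (\<lambda>_ v. if v \<in> U then c else 0) = c ^ r * real r * real (edges_in E U)"
proof -
  let ?S = "{v \<in> tuples r V. v ` {..<r} \<in> E}"
  have "finite ?S"
    using assms by (simp add: uniform_hypergraph_def finite_tuples)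
  then have "(\<Sum>v\<in>?S. \<Prod>i<r. if v i \<in> U then c else 0) = c ^ r * card {v \<in> ?S. v ` {..<r} \<subseteq> U}"
    by (simp add: prod_if_mem sum.If_cases Int_def)
  also have "{v \<in> ?S. v ` {..<r} \<subseteq> U} = {v \<in> tuples r V. v ` {..<r} \<in> E \<and> v ` {..<r} \<subseteq> U}"
    by auto
  finally have "(\<Sum>v\<in>?S. \<Prod>i<r. if v i \<in> U then c else 0) = c ^ r * (fact r * edges_in E U)"
    using card_edge_tuples_within[OF assms(1)] by simp
  moreover have "(fact r :: real) / fact (r - 1) = real r"
    using assms(2) by (cases r) auto
  ultimately show ?thesis
    unfolding adj_map_def by (simp add: field_simps)
qed

lemma J_map_indicator:
  assumes "finite V" and "U \<subseteq> V"
  shows "J_map r V (\<lambda>_ v. if v \<in> U then c else 0) = c ^ r * real (card U) ^ r"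
proof -
  have "{v \<in> tuples r V. v ` {..<r} \<subseteq> U} = tuples r U"
    using assms(2) by (auto simp: tuples_def PiE_def)
  then have "J_map r V (\<lambda>_ v. if v \<in> U then c else 0) = c ^ r * card (tuples r U)"
    using assms(1) by (simp add: J_map_def prod_if_mem sum.If_cases Int_def finite_tuples)
  then show ?thesis
    by (simp add: tuples_def card_PiE)
qed

text \<open>The discrepancy of U when edges are compared with r-tuples drawn with repetition:
  this is what sigma_H sees on the indicator of U.\<close>
definition disc_approx :: "nat \<Rightarrow> nat set \<Rightarrow> nat set set \<Rightarrow> nat set \<Rightarrow> real" where
  "disc_approx r V E U = real (edges_in E U) - real (card E) * (real (card U) / real (card V)) ^ r"

lemma norm_adj_map_indicator:
  assumes "uniform_hypergraph r V E" and "r \<ge> 1" and "U \<subseteq> V"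
  shows "norm_adj_map r V E (\<lambda>_ v. if v \<in> U then c else 0) = c ^ r * real r * disc_approx r V E U"
  using assms adj_map_indicator[OF assms(1,2)] J_map_indicator[of V U r c]
  by (simp add: uniform_hypergraph_def norm_adj_map_def disc_approx_def power_divide algebra_simps)

definition unit_indicator :: "real \<Rightarrow> nat set \<Rightarrow> nat \<Rightarrow> real" where
  "unit_indicator p U = (\<lambda>v. if v \<in> U then real (card U) powr (-1 / p) else 0)"

lemma pnorm_unit_indicator:
  assumes "p > 0" and "finite V" and "U \<subseteq> V" and "U \<noteq> {}"
  shows "pnorm p V (unit_indicator p U) = 1"
proof -
  have U: "0 < real (card U)"
    using assms finite_subset[of U V] by (simp add: card_gt_0_iff)
  have "(\<Sum>v\<in>V. \<bar>unit_indicator p U v\<bar> powr p) = (\<Sum>v\<in>V. if v \<in> U then real (card U) powr (-1) else 0)"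
    using assms(1) by (intro sum.cong) (auto simp: unit_indicator_def powr_powr)
  also have "\<dots> = real (card U) * real (card U) powr (-1)"
    using assms(2,3) by (simp add: sum.If_cases Int_absorb1)
  also have "\<dots> = 1"
    using U by (simp add: powr_minus)
  finally show ?thesis
    by (simp add: pnorm_def)
qed

lemma scaled_norm_adj_map_unit_indicator:
  assumes "uniform_hypergraph r V E" and "r \<ge> 1" and "U \<subseteq> V" and "U \<noteq> {}"
  shows "real (card V) powr (real r / p) * norm_adj_map r V E (\<lambda>_. unit_indicator p U)
    = (real (card V) / real (card U)) powr (real r / p) * real r * disc_approx r V E U"
proof -
  have "0 < real (card U)"
    using assms finite_subset[of U V] by (simp add: uniform_hypergraph_def card_gt_0_iff)
  then have "(real (card U) powr (-1 / p)) ^ r = inverse (real (card U) powr (real r / p))"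
    by (simp add: powr_power powr_minus [symmetric])
  moreover have "(real (card V) / real (card U)) powr (real r / p)
      = real (card V) powr (real r / p) * inverse (real (card U) powr (real r / p))"
    by (subst powr_divide) (simp only: divide_inverse)
  ultimately show ?thesis
    unfolding unit_indicator_def norm_adj_map_indicator[OF assms(1-3)] by (simp add: ac_simps)
qed

lemma abs_le_pnorm:
  assumes "p > 0" and "finite V" and "v \<in> V"
  shows "\<bar>x v\<bar> \<le> pnorm p V x"
proof -
  have "\<bar>x v\<bar> = (\<bar>x v\<bar> powr p) powr (1 / p)"
    using assms(1) by (simp add: powr_powr)
  also have "\<dots> \<le> (\<Sum>w\<in>V. \<bar>x w\<bar> powr p) powr (1 / p)"
    using assms by (intro powr_mono2 member_le_sum) auto
  finally show ?thesis
    by (simp add: pnorm_def)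
qed

lemma abs_sum_tuples_prod_le:
  assumes "finite V" and "S \<subseteq> tuples r V" and "\<And>i v. i < r \<Longrightarrow> v \<in> V \<Longrightarrow> \<bar>xs i v\<bar> \<le> 1"
  shows "\<bar>\<Sum>v\<in>S. \<Prod>i<r. xs i (v i)\<bar> \<le> real (card V) ^ r"
proof -
  have "\<bar>\<Prod>i<r. xs i (v i)\<bar> \<le> 1" if "v \<in> S" for v
    using that assms(2,3) unfolding abs_prod by (intro prod_le_1) (auto simp: tuples_def)
  then have "(\<Sum>v\<in>S. \<bar>\<Prod>i<r. xs i (v i)\<bar>) \<le> real (card S) * 1"
    by (intro sum_bounded_above)
  then have "\<bar>\<Sum>v\<in>S. \<Prod>i<r. xs i (v i)\<bar> \<le> real (card S)"
    by (simp add: order.trans[OF sum_abs])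
  also have "card S \<le> card (tuples r V)"
    using assms(1,2) by (intro card_mono finite_tuples)
  finally show ?thesis
    by (simp add: tuples_def card_PiE)
qed

lemma abs_norm_adj_map_le:
  assumes "finite V" and "\<And>i v. i < r \<Longrightarrow> v \<in> V \<Longrightarrow> \<bar>xs i v\<bar> \<le> 1"
  shows "\<bar>norm_adj_map r V E xs\<bar> \<le> real (card V) ^ r + real r * real (card E)"
proof -
  have "\<bar>\<Sum>v\<in>{v \<in> tuples r V. v ` {..<r} \<in> E}. \<Prod>i<r. xs i (v i)\<bar> \<le> real (card V) ^ r"
    using assms by (intro abs_sum_tuples_prod_le) auto
  moreover have "1 / fact (r - 1) \<le> (1::real)"
    by simp
  ultimately have adj: "\<bar>adj_map r V E xs\<bar> \<le> 1 * real (card V) ^ r"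
    unfolding adj_map_def abs_mult by (intro mult_mono) auto
  have J: "\<bar>J_map r V xs\<bar> \<le> real (card V) ^ r"
    unfolding J_map_def using abs_sum_tuples_prod_le[OF assms(1) order_refl assms(2)] .
  define a where "a = real r * real (card E) / real (card V) ^ r"
  have a: "0 \<le> a" "a * real (card V) ^ r \<le> real r * real (card E)"
    unfolding a_def by (cases "real (card V) ^ r = 0"; simp)+
  have "\<bar>a * J_map r V xs\<bar> \<le> real r * real (card E)"
    unfolding abs_mult abs_of_nonneg[OF a(1)] using J a by (meson mult_left_mono order.trans)
  with adj show ?thesis
    unfolding norm_adj_map_def a_def by linarith
qed

lemma abs_norm_adj_map_le_unit_vectors:
  assumes "p > 0" and "finite V" and "\<forall>i<r. pnorm p V (xs i) = 1"
  shows "\<bar>norm_adj_map r V E xs\<bar> \<le> real (card V) ^ r + real r * real (card E)"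
  using assms(2)
proof (rule abs_norm_adj_map_le)
  show "\<bar>xs i v\<bar> \<le> 1" if "i < r" "v \<in> V" for i v
    using abs_le_pnorm[OF assms(1,2) that(2), of "xs i"] assms(3) that(1) by simp
qed

lemma abs_norm_adj_map_le_mu:
  assumes "p > 0" and "finite V" and "\<forall>i<r. pnorm p V (xs i) = 1"
  shows "\<bar>norm_adj_map r V E xs\<bar> \<le> mu p r V E"
  unfolding mu_def using assms
  by (intro cSUP_upper bdd_aboveI2[OF abs_norm_adj_map_le_unit_vectors[OF assms(1,2)]]) auto

lemma norm_adj_map_le_lambda2:
  assumes "p > 0" and "finite V" and "pnorm p V x = 1"
  shows "norm_adj_map r V E (\<lambda>_. x) \<le> lambda2 p r V E"
proof -
  have "norm_adj_map r V E (\<lambda>_. x') \<le> real (card V) ^ r + real r * real (card E)"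
    if "pnorm p V x' = 1" for x'
    using abs_norm_adj_map_le_unit_vectors[OF assms(1,2), of r "\<lambda>_. x'" E] that
    by (simp add: order.trans[OF abs_ge_self])
  then show ?thesis
    unfolding lambda2_def using assms(3) by (intro cSUP_upper bdd_aboveI2) auto
qed

lemma disc_approx_empty:
  assumes "uniform_hypergraph r V E" and "r \<ge> 1"
  shows "disc_approx r V E {} = 0"
proof -
  have "{e \<in> E. e \<subseteq> {}} = {}"
    using assms by (auto simp: uniform_hypergraph_def)
  then have "edges_in E {} = 0"
    unfolding edges_in_def by (simp only: card.empty)
  then show ?thesis
    using assms(2) by (simp add: disc_approx_def)
qed

lemma disc_approx_whole:
  assumes "uniform_hypergraph r V E" and "V \<noteq> {}"
  shows "disc_approx r V E V = 0"
proof -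
  have "{e \<in> E. e \<subseteq> V} = E"
    using assms by (auto simp: uniform_hypergraph_def)
  then show ?thesis
    using assms by (simp add: disc_approx_def edges_in_def uniform_hypergraph_def)
qed

lemma one_le_card_ratio_powr:
  assumes "finite V" and "W \<subseteq> V" and "W \<noteq> {}" and "a \<ge> 0"
  shows "1 \<le> (real (card V) / real (card W)) powr a"
proof -
  have "0 < card W" "card W \<le> card V"
    using assms finite_subset[of W V] by (auto simp: card_gt_0_iff card_mono)
  then show ?thesis
    using assms(4) by (intro ge_one_powr_ge_zero) auto
qed

lemma disc_approx_le_lambda2:
  assumes H: "uniform_hypergraph r V E" and "r \<ge> 1" and "p > 0" and "V \<noteq> {}" and "U \<subseteq> V"
  shows "real r * disc_approx r V E U \<le> real (card V) powr (real r / p) * lambda2 p r V E"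
proof -
  have fin: "finite V"
    using H by (simp add: uniform_hypergraph_def)
  have nonneg_case: "real r * disc_approx r V E W \<le> real (card V) powr (real r / p) * lambda2 p r V E"
    if W: "W \<subseteq> V" "W \<noteq> {}" and "0 \<le> disc_approx r V E W" for W
  proof -
    have "1 \<le> (real (card V) / real (card W)) powr (real r / p)"
      using fin W \<open>p > 0\<close> by (intro one_le_card_ratio_powr) auto
    then have "real r * disc_approx r V E W
        \<le> (real (card V) / real (card W)) powr (real r / p) * real r * disc_approx r V E W"
      using mult_right_mono[of 1 _ "real r * disc_approx r V E W"] \<open>0 \<le> disc_approx r V E W\<close>
      by (simp add: mult.assoc)
    also have "\<dots> = real (card V) powr (real r / p) * norm_adj_map r V E (\<lambda>_. unit_indicator p W)"
      using scaled_norm_adj_map_unit_indicator[OF H \<open>r \<ge> 1\<close> W] by simp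
    also have "\<dots> \<le> real (card V) powr (real r / p) * lambda2 p r V E"
      using assms fin W by (intro mult_left_mono norm_adj_map_le_lambda2 pnorm_unit_indicator) auto
    finally show ?thesis .
  qed
  show ?thesis
  proof (cases "U \<noteq> {} \<and> 0 \<le> disc_approx r V E U")
    case True
    then show ?thesis
      using nonneg_case assms(5) by blast
  next
    case False
    then have "real r * disc_approx r V E U \<le> real r * disc_approx r V E V"
      using disc_approx_empty[OF H \<open>r \<ge> 1\<close>] disc_approx_whole[OF H \<open>V \<noteq> {}\<close>]
      by (auto simp: mult_nonneg_nonpos)
    also have "\<dots> \<le> real (card V) powr (real r / p) * lambda2 p r V E"
      using assms disc_approx_whole[OF H \<open>V \<noteq> {}\<close>] by (intro nonneg_case) auto
    finally show ?thesis .
  qed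
qed

lemma abs_disc_approx_le_mu:
  assumes H: "uniform_hypergraph r V E" and "r \<ge> 1" and "p > 0" and "V \<noteq> {}" and "U \<subseteq> V"
  shows "real r * \<bar>disc_approx r V E U\<bar> \<le> real (card V) powr (real r / p) * mu p r V E"
proof -
  have fin: "finite V"
    using H by (simp add: uniform_hypergraph_def)
  have nonempty_case: "real r * \<bar>disc_approx r V E W\<bar> \<le> real (card V) powr (real r / p) * mu p r V E"
    if W: "W \<subseteq> V" "W \<noteq> {}" for W
  proof -
    have "1 \<le> (real (card V) / real (card W)) powr (real r / p)"
      using fin W \<open>p > 0\<close> by (intro one_le_card_ratio_powr) auto
    then have "real r * \<bar>disc_approx r V E W\<bar>
        \<le> (real (card V) / real (card W)) powr (real r / p) * real r * \<bar>disc_approx r V E W\<bar>"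
      using mult_right_mono[of 1 _ "real r * \<bar>disc_approx r V E W\<bar>"] by (simp add: mult.assoc)
    also have "\<dots> = real (card V) powr (real r / p) * \<bar>norm_adj_map r V E (\<lambda>_. unit_indicator p W)\<bar>"
      using arg_cong[OF scaled_norm_adj_map_unit_indicator[OF H \<open>r \<ge> 1\<close> W, of p], of abs]
      by (simp add: abs_mult)
    also have "\<dots> \<le> real (card V) powr (real r / p) * mu p r V E"
      using assms fin pnorm_unit_indicator[OF \<open>p > 0\<close> fin W]
      by (intro mult_left_mono abs_norm_adj_map_le_mu) auto
    finally show ?thesis .
  qed
  show ?thesis
  proof (cases "U = {}")
    case True
    then show ?thesis
      using nonempty_case[of V] disc_approx_empty[OF H \<open>r \<ge> 1\<close>] disc_approx_whole[OF H \<open>V \<noteq> {}\<close>]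
        \<open>V \<noteq> {}\<close> by simp
  next
    case False
    then show ?thesis
      using nonempty_case assms(5) by blast
  qed
qed

lemma abs_disc_set_minus_disc_approx:
  assumes H: "uniform_hypergraph r V E" and "U \<subseteq> V"
  shows "\<bar>disc_set r V E U - disc_approx r V E U\<bar> \<le> real r * avg_degree r V E"
proof (cases "E = {}")
  case True
  then show ?thesis
    by (simp add: disc_set_def disc_approx_def edges_in_def edge_density_def avg_degree_def)
next
  case False
  then obtain e where "e \<in> E"
    by blast
  with H have "r \<le> card V" "card U \<le> card V"
    using assms(2) by (auto simp: uniform_hypergraph_def intro: card_mono)
  have "disc_set r V E U - disc_approx r V E U
      = real (card E) * ((real (card U) / real (card V)) ^ r - real (card U choose r) / real (card V choose r))"
    by (simp add: disc_set_def disc_approx_def edge_density_def algebra_simps)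
  also have "\<bar>\<dots>\<bar>
      = real (card E) * \<bar>real (card U choose r) / real (card V choose r) - (real (card U) / real (card V)) ^ r\<bar>"
    by (simp add: abs_mult abs_minus_commute)
  also have "\<dots> \<le> real (card E) * (real r ^ 2 / real (card V))"
    using \<open>r \<le> card V\<close> \<open>card U \<le> card V\<close> by (intro mult_left_mono binomial_ratio_approx_power) auto
  also have "\<dots> = real r * avg_degree r V E"
    by (simp add: avg_degree_def power2_eq_square)
  finally show ?thesis .
qed

lemma disc_plus_le_lambda2:
  assumes "uniform_hypergraph r V E" and "r \<ge> 1" and "p > 0" and "V \<noteq> {}"
  shows "real r * disc_plus r V E - real r ^ 2 * avg_degree r V E
    \<le> real (card V) powr (real r / p) * lambda2 p r V E"
proof -
  have "finite (Pow V)"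
    using assms(1) by (simp add: uniform_hypergraph_def)
  then have "disc_plus r V E \<in> disc_set r V E ` Pow V"
    unfolding disc_plus_def by (intro Max_in) auto
  then obtain U where U: "U \<subseteq> V" and max: "disc_plus r V E = disc_set r V E U"
    by auto
  have "disc_set r V E U \<le> disc_approx r V E U + real r * avg_degree r V E"
    using abs_disc_set_minus_disc_approx[OF assms(1) U] by linarith
  then have "real r * disc_set r V E U \<le> real r * disc_approx r V E U + real r ^ 2 * avg_degree r V E"
    using mult_left_mono[of _ _ "real r"] by (fastforce simp: algebra_simps power2_eq_square)
  then show ?thesis
    unfolding max using disc_approx_le_lambda2[OF assms U] by linarith
qed

lemma disc_le_mu:
  assumes "uniform_hypergraph r V E" and "r \<ge> 1" and "p > 0" and "V \<noteq> {}"
  shows "real r * disc r V E - real r ^ 2 * avg_degree r V E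
    \<le> real (card V) powr (real r / p) * mu p r V E"
proof -
  have "finite (Pow V)"
    using assms(1) by (simp add: uniform_hypergraph_def)
  then have "disc r V E \<in> (\<lambda>U. \<bar>disc_set r V E U\<bar>) ` Pow V"
    unfolding disc_def by (intro Max_in) auto
  then obtain U where U: "U \<subseteq> V" and max: "disc r V E = \<bar>disc_set r V E U\<bar>"
    by auto
  have "\<bar>disc_set r V E U\<bar> \<le> \<bar>disc_approx r V E U\<bar> + real r * avg_degree r V E"
    using abs_disc_set_minus_disc_approx[OF assms(1) U] by linarith
  then have "real r * \<bar>disc_set r V E U\<bar> \<le> real r * \<bar>disc_approx r V E U\<bar> + real r ^ 2 * avg_degree r V E"
    using mult_left_mono[of _ _ "real r"] by (fastforce simp: algebra_simps power2_eq_square)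
  then show ?thesis
    unfolding max using abs_disc_approx_le_mu[OF assms U] by linarith
qed

theorem lemma1p9:
  "\<forall>r::nat. r \<ge> 2 \<longrightarrow> (\<exists>C::real. C > 0 \<and>
     (\<forall>(V::nat set) (E::nat set set) (p::real).
        uniform_hypergraph r V E \<and> V \<noteq> {} \<and> p > 0 \<longrightarrow>
          real (card V) powr (real r / p) * lambda2 p r V E
            \<ge> real r * disc_plus r V E - C * avg_degree r V E
        \<and> real (card V) powr (real r / p) * mu p r V E
            \<ge> real r * disc r V E - C * avg_degree r V E))"
proof -
  have "r \<ge> 2 \<Longrightarrow> r \<ge> 1 \<and> real r ^ 2 > 0" for r :: nat
    by simp
  then show ?thesis
    using disc_plus_le_lambda2 disc_le_mu by blast
qed

end
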